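(* Let Assumptions (A1), (A3), (A4) and (A15) below hold, let $C\in\mathbb{R}$, and assume that $\Pi^\star$ is minimal. Then there exist $N_0\in\mathbb{N}$ and $\delta_2\in\mathcal L$ such that for all $x,y\in\mathbb{X}_{\mathrm{pi}}(C,N_0)$ and all $N\ge N_0$ $$\tilde V_N^\beta(y)-\lambda(y)-\tilde V_N^\beta(x)+\lambda(x)\le V_N^\beta(y)-V_N^\beta(x)+\delta_2(N).$$
   Context: System $x(k+1)=f(x(k),u(k))$ with constraint sets $\mathbb{X}\subset\mathbb{R}^n$, $\mathbb{U}\subset\mathbb{R}^m$ and stage cost $\ell:\mathbb{X}\times\mathbb{U}\to\mathbb{R}$, which is assumed non-negative. For $u\in\mathbb{U}^T$, $x_u(0,x)=x$, $x_u(k+1,x)=f(x_u(k,x),u(k))$; $\mathbb{U}^T(x)$ is the set of $u\in\mathbb{U}^T$ with $x_u(k,x)\in\mathbb{X}$ for $k=0,\dots,T$. A feasible $p$-periodic orbit is $\Pi\in(\mathbb{X}\times\mathbb{U})^p$ with $\Pi_\mathbb{X}([k+1]_p)=f(\Pi(k))$ ($[k]_p$ = $k$ mod $p$); it is minimal if $\Pi_\mathbb{X}(k)=\Pi_\mathbb{X}(j)$ implies $k=j$. $\|(x,u)\|_\Pi:=\min_k\|(x,u)-\Pi(k)\|$, $\|x\|_{\Pi_\mathbb{X}}:=\min_k\|x-\Pi_\mathbb{X}(k)\|$; $\ell^\star:=\inf$ over all feasible periodic orbits of $\frac1p\sum_{k=0}^{p-1}\ell(\Pi(k))$; $\Pi^\star$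 is a fixed feasible $p^\star$-periodic orbit attaining $\ell^\star$. $\mathcal L$: continuous decreasing functions $[0,\infty)\to[0,\infty)$ tending to $0$. (A1) $f,\ell$ continuous, $\mathbb{X},\mathbb{U}$ compact. (A3) There are $\lambda:\mathbb{X}\to\mathbb{R}$, $\bar\lambda$ with $|\lambda|\le\bar\lambda$ on $\mathbb{X}$, and $\underline\alpha_{\tilde\ell}\in\mathcal K_\infty$ such that $\tilde\ell(x,u):=\ell(x,u)-\ell^\star+\lambda(x)-\lambda(f(x,u))\ge\underline\alpha_{\tilde\ell}(\|(x,u)\|_{\Pi^\star})$ for all $x\in\mathbb{X}$, $u\in\mathbb{U}^1(x)$. (A4) There are $\kappa>0$, $M'\in\mathbb{N}$, $\rho\in\mathcal K_\infty$ such that for all $z\in\{\Pi^\star_\mathbb{X}(k)\}$ and $x,y\in\mathbb{X}$ with $\|x-z\|,\|y-z\|\le\kappa$ there is $u\in\mathbb{U}^{M'}(x)$ with $x_u(M',x)=y$ and $\|(x_u(k,x),u(k))\|_{\Pi^\star}\le\rho(\max\{\|x\|_{\Pi^\star_\mathbb{X}},\|y\|_{\Pi^\star_\mathbb{X}}\})$ for $k=0,\dots,M'-1$. (A15) $\lambda$ is continuous and there is $\overline\alpha_\lambda\in\mathcal K_\infty$ with $|\lambda(x)-\lambda(\Pi^\star_\mathbb{X}(k))|\le\overline\alpha_\lambda(\|x-\Pi^\star_\mathbb{X}(k)\|)$ for all $x\in\mathbb{X}$, $k=0,\dots,p^\star-1$. Discounted MPC: $\beta_N(k)=\frac{N-k}{N}$,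 $V_N^\beta(x)=\inf_{u\in\mathbb{U}^N(x)}\sum_{k=0}^{N-1}\beta_N(k)\ell(x_u(k,x),u(k))$ and $\tilde V_N^\beta(x)=\inf_{u\in\mathbb{U}^N(x)}\sum_{k=0}^{N-1}\beta_N(k)\tilde\ell(x_u(k,x),u(k))$. $\mathbb{X}_{\mathrm{pi}}(C,N_0)$ is the set of $x\in\mathbb{X}$ with $V_N^\beta(x)-\frac{N+1}{2}\ell^\star+\lambda(x)+\bar\lambda\le C$ for all $N\ge N_0$. *)

theory Defs
  imports "HOL-Analysis.Analysis"
begin

fun traj :: "('x \<Rightarrow> 'u \<Rightarrow> 'x) \<Rightarrow> (nat \<Rightarrow> 'u) \<Rightarrow> 'x \<Rightarrow> nat \<Rightarrow> 'x" where
  "traj f u x 0 = x"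
| "traj f u x (Suc k) = f (traj f u x k) (u k)"

text \<open>Admissible control sequences U^T(x) (only the first T entries matter).\<close>
definition adm :: "('x \<Rightarrow> 'u \<Rightarrow> 'x) \<Rightarrow> 'x set \<Rightarrow> 'u set \<Rightarrow> nat \<Rightarrow> 'x \<Rightarrow> (nat \<Rightarrow> 'u) set" where
  "adm f X U T x = {u. (\<forall>k<T. u k \<in> U) \<and> (\<forall>k\<le>T. traj f u x k \<in> X)}"

definition feasible_orbit :: "('x \<Rightarrow> 'u \<Rightarrow> 'x) \<Rightarrow> 'x set \<Rightarrow> 'u set \<Rightarrow> nat \<Rightarrow> (nat \<Rightarrow> 'x \<times> 'u) \<Rightarrow> bool" where
  "feasible_orbit f X U p Orb \<longleftrightarrow> p > 0 \<and>
     (\<forall>k<p. Orb k \<in> X \<times> U \<and> fst (Orb (Suc k mod p)) = f (fst (Orb k)) (snd (Orb k)))"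

definition minimal_orbit :: "nat \<Rightarrow> (nat \<Rightarrow> 'x \<times> 'u) \<Rightarrow> bool" where
  "minimal_orbit p Orb \<longleftrightarrow> (\<forall>k<p. \<forall>j<p. fst (Orb k) = fst (Orb j) \<longrightarrow> k = j)"

definition orbit_avg :: "('x \<Rightarrow> 'u \<Rightarrow> real) \<Rightarrow> nat \<Rightarrow> (nat \<Rightarrow> 'x \<times> 'u) \<Rightarrow> real" where
  "orbit_avg l p Orb = (1 / real p) * (\<Sum>k<p. l (fst (Orb k)) (snd (Orb k)))"

definition lstar :: "('x \<Rightarrow> 'u \<Rightarrow> 'x) \<Rightarrow> 'x set \<Rightarrow> 'u set \<Rightarrow> ('x \<Rightarrow> 'u \<Rightarrow> real) \<Rightarrow> real" where
  "lstar f X U l = Inf {orbit_avg l p Orb | p Orb. feasible_orbit f X U p Orb}"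

definition orbit_dist :: "nat \<Rightarrow> (nat \<Rightarrow> 'x::real_normed_vector \<times> 'u::real_normed_vector) \<Rightarrow> 'x \<times> 'u \<Rightarrow> real" where
  "orbit_dist p Orb z = Min ((\<lambda>k. norm (z - Orb k)) ` {..<p})"

definition orbit_state_dist :: "nat \<Rightarrow> (nat \<Rightarrow> 'x::real_normed_vector \<times> 'u) \<Rightarrow> 'x \<Rightarrow> real" where
  "orbit_state_dist p Orb x = Min ((\<lambda>k. norm (x - fst (Orb k))) ` {..<p})"

definition class_Kinf :: "(real \<Rightarrow> real) \<Rightarrow> bool" where
  "class_Kinf a \<longleftrightarrow> continuous_on {0..} a \<and> a 0 = 0 \<and> strict_mono_on {0..} a
     \<and> filterlim a at_top at_top"

definition class_L :: "(real \<Rightarrow> real) \<Rightarrow> bool" where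
  "class_L d \<longleftrightarrow> continuous_on {0..} d \<and> (\<forall>t\<ge>0. d t \<ge> 0)
     \<and> (\<forall>s t. 0 \<le> s \<longrightarrow> s \<le> t \<longrightarrow> d t \<le> d s) \<and> (d \<longlongrightarrow> 0) at_top"

definition ltilde :: "('x \<Rightarrow> 'u \<Rightarrow> 'x) \<Rightarrow> ('x \<Rightarrow> 'u \<Rightarrow> real) \<Rightarrow> real \<Rightarrow> ('x \<Rightarrow> real) \<Rightarrow> 'x \<Rightarrow> 'u \<Rightarrow> real" where
  "ltilde f l ls lam x u = l x u - ls + lam x - lam (f x u)"

definition Vbeta :: "('x \<Rightarrow> 'u \<Rightarrow> 'x) \<Rightarrow> 'x set \<Rightarrow> 'u set \<Rightarrow> ('x \<Rightarrow> 'u \<Rightarrow> real) \<Rightarrow> nat \<Rightarrow> 'x \<Rightarrow> real" where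
  "Vbeta f X U g N x = Inf ((\<lambda>u. \<Sum>k<N. (real (N - k) / real N) * g (traj f u x k) (u k)) ` adm f X U N x)"

text \<open>X_pi(C,N0); membership requires V_N^\<beta>(x) < \<infinity>, i.e. U^N(x) nonempty.\<close>
definition Xpi :: "('x \<Rightarrow> 'u \<Rightarrow> 'x) \<Rightarrow> 'x set \<Rightarrow> 'u set \<Rightarrow> ('x \<Rightarrow> 'u \<Rightarrow> real) \<Rightarrow> ('x \<Rightarrow> real) \<Rightarrow> real \<Rightarrow> real \<Rightarrow> nat \<Rightarrow> 'x set" where
  "Xpi f X U l lam lbar C N0 = {x \<in> X. \<forall>N\<ge>N0. adm f X U N x \<noteq> {} \<and>
     Vbeta f X U l N x - (real N + 1) / 2 * lstar f X U l + lam x + lbar \<le> C}"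

end

(*
  Rotating the stage cost changes the linearly discounted cost of a control by the constant
  (N+1)/2 l*, by lambda(x), and by minus the average of lambda along the trajectory. Hence
  V~(y) - lambda(y) - V~(x) + lambda(x) - (V(y) - V(x)) is at most the difference of these
  averages along nearly optimal controls, and on X_pi(C,1) those controls have rotated cost at
  most C+1. By strict dissipativity such a trajectory is epsilon-far from the optimal orbit in
  at most m + O(N/m) steps, and near the minimal orbit it follows the orbit index by index; so
  the average of lambda is uniformly close to its orbit mean for large N. A bounded family of
  gaps that eventually drops below every tau is dominated by the continuous decreasing envelope
  inf (a + c/(t+1)), which serves as delta_2 with N_0 = 1.
*)
theory Submission
  imports Defs
begin

section \<open>Hyperbolic envelopes\<close>

definition hyperbolic_majorants :: "(nat \<Rightarrow> real set) \<Rightarrow> (real \<times> real) set" where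
  "hyperbolic_majorants S =
     {(a, c). 0 \<le> a \<and> 0 \<le> c \<and> (\<forall>N. \<forall>v\<in>S N. v \<le> a + c / (real N + 1))}"

text \<open>Each \<open>a + c / (t + 1)\<close> with \<open>a, c \<ge> 0\<close> is decreasing and satisfies
  \<open>a + c / (s + 1) \<le> (a + c / (t + 1)) (t + 1) / (s + 1)\<close> for \<open>s \<le> t\<close>; the infimum inherits
  both properties, hence is Lipschitz.\<close>
definition hyperbolic_envelope :: "(nat \<Rightarrow> real set) \<Rightarrow> real \<Rightarrow> real" where
  "hyperbolic_envelope S t = (INF (a, c)\<in>hyperbolic_majorants S. a + c / (t + 1))"

context
  fixes S :: "nat \<Rightarrow> real set" and B :: real
  assumes bounded: "\<And>N v. v \<in> S N \<Longrightarrow> v \<le> B" and B_nonneg: "0 \<le> B"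
begin

lemma hyperbolic_majorants_nonempty: "(B, 0) \<in> hyperbolic_majorants S"
  using bounded B_nonneg by (auto simp: hyperbolic_majorants_def)

lemma hyperbolic_envelope_le:
  assumes "(a, c) \<in> hyperbolic_majorants S" "0 \<le> t"
  shows "hyperbolic_envelope S t \<le> a + c / (t + 1)"
proof -
  have "bdd_below ((\<lambda>(a, c). a + c / (t + 1)) ` hyperbolic_majorants S)"
    using \<open>0 \<le> t\<close> by (intro bdd_belowI[of _ 0]) (auto simp: hyperbolic_majorants_def)
  then show ?thesis
    unfolding hyperbolic_envelope_def using assms by (auto intro: cINF_lower2)
qed

lemma hyperbolic_envelope_greatest:
  assumes "\<And>a c. (a, c) \<in> hyperbolic_majorants S \<Longrightarrow> z \<le> a + c / (t + 1)"
  shows "z \<le> hyperbolic_envelope S t"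
  unfolding hyperbolic_envelope_def
  using hyperbolic_majorants_nonempty assms by (intro cINF_greatest) auto

lemma hyperbolic_envelope_nonneg: "0 \<le> t \<Longrightarrow> 0 \<le> hyperbolic_envelope S t"
  by (rule hyperbolic_envelope_greatest) (auto simp: hyperbolic_majorants_def)

lemma hyperbolic_envelope_upper: "v \<in> S N \<Longrightarrow> v \<le> hyperbolic_envelope S (real N)"
  by (rule hyperbolic_envelope_greatest) (auto simp: hyperbolic_majorants_def)

lemma hyperbolic_envelope_ratio:
  assumes "0 \<le> s" "s \<le> t"
  shows "hyperbolic_envelope S s \<le> hyperbolic_envelope S t * ((t + 1) / (s + 1))"
proof -
  have "hyperbolic_envelope S s * ((s + 1) / (t + 1)) \<le> hyperbolic_envelope S t"
  proof (rule hyperbolic_envelope_greatest)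
    fix a c assume ac: "(a, c) \<in> hyperbolic_majorants S"
    then have "0 \<le> a" by (auto simp: hyperbolic_majorants_def)
    have "hyperbolic_envelope S s * ((s + 1) / (t + 1)) \<le> (a + c / (s + 1)) * ((s + 1) / (t + 1))"
      using hyperbolic_envelope_le[OF ac] assms by (intro mult_right_mono) auto
    also have "\<dots> = a * ((s + 1) / (t + 1)) + c / (t + 1)"
    proof -
      have "c / (s + 1) * ((s + 1) / (t + 1)) = c / (t + 1)" using assms by simp
      then show ?thesis by (simp only: distrib_right)
    qed
    also have "\<dots> \<le> a + c / (t + 1)"
      using \<open>0 \<le> a\<close> assms by (intro add_right_mono mult_left_le) auto
    finally show "hyperbolic_envelope S s * ((s + 1) / (t + 1)) \<le> a + c / (t + 1)" .
  qed
  with assms show ?thesis by (simp add: field_simps)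
qed

lemma hyperbolic_envelope_antimono:
  assumes "0 \<le> s" "s \<le> t"
  shows "hyperbolic_envelope S t \<le> hyperbolic_envelope S s"
proof (rule hyperbolic_envelope_greatest)
  fix a c assume ac: "(a, c) \<in> hyperbolic_majorants S"
  then have "c / (t + 1) \<le> c / (s + 1)"
    using assms by (intro divide_left_mono) (auto simp: hyperbolic_majorants_def)
  then show "hyperbolic_envelope S t \<le> a + c / (s + 1)"
    using hyperbolic_envelope_le[OF ac, of t] assms by linarith
qed

lemma hyperbolic_envelope_lipschitz:
  "(hyperbolic_envelope S 0)-lipschitz_on {0..} (hyperbolic_envelope S)"
proof -
  define \<delta> where "\<delta> = hyperbolic_envelope S"
  have decrease: "\<delta> s - \<delta> t \<le> \<delta> 0 * (t - s)" if "0 \<le> s" "s \<le> t" for s t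
  proof -
    have "\<delta> s - \<delta> t \<le> \<delta> t * ((t - s) / (s + 1))"
      using hyperbolic_envelope_ratio[OF that, folded \<delta>_def] that by (simp add: field_simps)
    also have "\<dots> \<le> \<delta> 0 * (t - s)"
    proof (rule mult_mono)
      show "(t - s) / (s + 1) \<le> t - s"
        using that by (auto simp: field_simps intro: mult_left_mono)
    qed (use that hyperbolic_envelope_nonneg[of t] hyperbolic_envelope_antimono[of 0 t] in
          \<open>auto simp: \<delta>_def\<close>)
    finally show ?thesis .
  qed
  have ordered: "dist (\<delta> s) (\<delta> t) \<le> \<delta> 0 * dist s t" if "0 \<le> s" "s \<le> t" for s t
    using decrease[OF that] hyperbolic_envelope_antimono[OF that, folded \<delta>_def] that
    by (simp add: dist_real_def)
  show ?thesis
    unfolding \<delta>_def[symmetric]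
  proof (rule lipschitz_onI)
    fix s t :: real assume "s \<in> {0..}" "t \<in> {0..}"
    then show "dist (\<delta> s) (\<delta> t) \<le> \<delta> 0 * dist s t"
      using ordered[of s t] ordered[of t s] by (cases "s \<le> t") (auto simp: dist_commute)
  qed (simp add: hyperbolic_envelope_nonneg \<delta>_def)
qed

lemma hyperbolic_envelope_tendsto_0:
  assumes small: "\<And>\<tau>. 0 < \<tau> \<Longrightarrow> \<exists>N1. \<forall>N\<ge>N1. \<forall>v\<in>S N. v \<le> \<tau>"
  shows "(hyperbolic_envelope S \<longlongrightarrow> 0) at_top"
proof (rule order_tendstoI)
  fix \<tau> :: real assume "\<tau> > 0"
  then obtain N1 where N1: "\<And>N v. N1 \<le> N \<Longrightarrow> v \<in> S N \<Longrightarrow> v \<le> \<tau> / 2"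
    using small[of "\<tau> / 2"] by auto
  text \<open>Before \<open>N1\<close> the bound \<open>B\<close> is absorbed by the hyperbolic term.\<close>
  define c where "c = real (N1 + 1) * B"
  have majorant: "(\<tau> / 2, c) \<in> hyperbolic_majorants S"
  proof -
    have "v \<le> \<tau> / 2 + c / (real N + 1)" if "v \<in> S N" for N v
    proof (cases "N1 \<le> N")
      case True
      then show ?thesis using N1 that B_nonneg by (auto intro: add_increasing2 simp: c_def)
    next
      case False
      then have "B \<le> c / (real N + 1)"
        using B_nonneg by (simp add: c_def field_simps mult_left_mono)
      then show ?thesis using bounded[OF that] \<open>\<tau> > 0\<close> by linarith
    qed
    then show ?thesis using \<open>\<tau> > 0\<close> B_nonneg by (auto simp: hyperbolic_majorants_def c_def)
  qed
  have "\<forall>\<^sub>F t in at_top. hyperbolic_envelope S t \<le> \<tau> / 2 + c / (t + 1)"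
    using eventually_ge_at_top[of "0::real"]
    by eventually_elim (rule hyperbolic_envelope_le[OF majorant])
  moreover have "LIM t at_top. (t::real) + 1 :> at_top"
    using filterlim_tendsto_add_at_top[OF tendsto_const[of "1::real"] filterlim_ident]
    by (simp add: add.commute)
  then have "((\<lambda>t. \<tau> / 2 + c / (t + 1)) \<longlongrightarrow> \<tau> / 2 + 0) at_top"
    by (intro tendsto_add tendsto_const tendsto_divide_0[OF tendsto_const]
        filterlim_at_top_imp_at_infinity)
  then have "\<forall>\<^sub>F t in at_top. \<tau> / 2 + c / (t + 1) < \<tau>"
    by (rule order_tendstoD(2)) (use \<open>\<tau> > 0\<close> in simp)
  ultimately show "\<forall>\<^sub>F t in at_top. hyperbolic_envelope S t < \<tau>"
    by eventually_elim simp
next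
  fix a :: real assume "a < 0"
  show "\<forall>\<^sub>F t in at_top. a < hyperbolic_envelope S t"
    using eventually_ge_at_top[of "0::real"]
    by eventually_elim (use \<open>a < 0\<close> hyperbolic_envelope_nonneg in fastforce)
qed

lemma class_L_hyperbolic_envelope:
  assumes "\<And>\<tau>. 0 < \<tau> \<Longrightarrow> \<exists>N1. \<forall>N\<ge>N1. \<forall>v\<in>S N. v \<le> \<tau>"
  shows "class_L (hyperbolic_envelope S)"
  unfolding class_L_def
  using lipschitz_on_continuous_on[OF hyperbolic_envelope_lipschitz] hyperbolic_envelope_nonneg
    hyperbolic_envelope_antimono hyperbolic_envelope_tendsto_0[OF assms]
  by blast

end

section \<open>Counting and telescoping\<close>

lemma card_large_terms_le:
  fixes a :: "nat \<Rightarrow> real" and N m :: nat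
  assumes "0 < N" "0 < m" and a_nonneg: "\<And>k. k < N \<Longrightarrow> 0 \<le> a k" and "0 < \<alpha>"
    and weighted_sum: "(\<Sum>k<N. real (N - k) / real N * a k) \<le> D"
    and large: "\<And>k. k < N \<Longrightarrow> P k \<Longrightarrow> \<alpha> \<le> a k"
  shows "real (card {k. k < N \<and> P k}) \<le> real m + D * real N / (real m * \<alpha>)"
proof -
  have "0 \<le> (\<Sum>k<N. real (N - k) / real N * a k)"
    using a_nonneg by (intro sum_nonneg) simp
  with weighted_sum have "0 \<le> D" by linarith
  show ?thesis
  proof (cases "N \<le> m")
    case True
    have "card {k. k < N \<and> P k} \<le> card {..<N}" by (intro card_mono) auto
    with True have "real (card {k. k < N \<and> P k}) \<le> real m" by simp
    moreover have "0 \<le> D * real N / (real m * \<alpha>)" using \<open>0 \<le> D\<close> \<open>0 < \<alpha>\<close> by simp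
    ultimately show ?thesis by linarith
  next
    case False
    text \<open>Before step \<open>N - m\<close> every weight is at least \<open>m / N\<close>.\<close>
    define early where "early = {k. k < N - m \<and> P k}"
    have "card {k. k < N \<and> P k} \<le> card (early \<union> {N - m..<N})"
      by (intro card_mono) (auto simp: early_def)
    also have "\<dots> \<le> card early + card {N - m..<N}" by (rule card_Un_le)
    finally have card_split: "real (card {k. k < N \<and> P k}) \<le> real (card early) + real m"
      using False by simp
    have "real (card early) * (real m / real N * \<alpha>) = (\<Sum>k\<in>early. real m / real N * \<alpha>)"
      by simp
    also have "\<dots> \<le> (\<Sum>k\<in>early. real (N - k) / real N * a k)"
    proof (rule sum_mono)
      fix k assume k: "k \<in> early"
      then have "real m \<le> real (N - k)" by (auto simp: early_def)
      then have "real m / real N \<le> real (N - k) / real N" by (rule divide_right_mono) simp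
      moreover have "\<alpha> \<le> a k" using k large by (auto simp: early_def)
      ultimately show "real m / real N * \<alpha> \<le> real (N - k) / real N * a k"
        using \<open>0 < \<alpha>\<close> by (intro mult_mono) auto
    qed
    also have "\<dots> \<le> (\<Sum>k<N. real (N - k) / real N * a k)"
      using a_nonneg by (intro sum_mono2) (auto simp: early_def)
    finally have "real (card early) * (real m / real N * \<alpha>) \<le> D"
      using weighted_sum by linarith
    then have "real (card early) \<le> D * real N / (real m * \<alpha>)"
      using assms by (simp add: field_simps)
    with card_split show ?thesis by linarith
  qed
qed

lemma card_broken_pairs_le:
  assumes "\<And>k. g k \<Longrightarrow> k < N"
  shows "card {k. k < N \<and> \<not> (g k \<and> g (Suc k))} \<le> 2 * card {k. k < N \<and> \<not> g k} + 1"
proof -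
  have "card {k. k < N \<and> \<not> g (Suc k)} = card (Suc ` {k. k < N \<and> \<not> g (Suc k)})"
    by (simp add: card_image)
  also have "\<dots> \<le> card (insert N {k. k < N \<and> \<not> g k})"
    using assms by (intro card_mono) auto
  also have "\<dots> \<le> card {k. k < N \<and> \<not> g k} + 1"
    by (simp add: card_insert_if)
  finally have shifted: "card {k. k < N \<and> \<not> g (Suc k)} \<le> card {k. k < N \<and> \<not> g k} + 1" .
  have "card {k. k < N \<and> \<not> (g k \<and> g (Suc k))}
      \<le> card ({k. k < N \<and> \<not> g k} \<union> {k. k < N \<and> \<not> g (Suc k)})"
    by (intro card_mono) auto
  also have "\<dots> \<le> card {k. k < N \<and> \<not> g k} + card {k. k < N \<and> \<not> g (Suc k)}"
    by (rule card_Un_le)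
  finally show ?thesis using shifted by linarith
qed

lemma sum_le_exceptions:
  fixes w K :: real
  assumes "0 \<le> w" "0 \<le> K" "\<And>k. k < N \<Longrightarrow> e k \<le> (if Q k then w else K)"
  shows "(\<Sum>k<N. e k) \<le> real N * w + K * real (card {k. k < N \<and> \<not> Q k})"
proof -
  have "(\<Sum>k<N. e k) \<le> (\<Sum>k<N. w + K * of_bool (\<not> Q k))"
  proof (rule sum_mono)
    fix k assume "k \<in> {..<N}"
    then show "e k \<le> w + K * of_bool (\<not> Q k)"
      using assms(3)[of k] assms(1,2) by (auto split: if_splits)
  qed
  also have "\<dots> = real N * w + K * (\<Sum>k<N. of_bool (\<not> Q k))"
    by (simp add: sum.distrib sum_distrib_left)
  also have "(\<Sum>k<N. of_bool (\<not> Q k)) = real (card {k. k < N \<and> \<not> Q k})"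
  proof -
    have "{..<N} \<inter> {k. \<not> Q k} = {k. k < N \<and> \<not> Q k}" by auto
    then show ?thesis by simp
  qed
  finally show ?thesis .
qed

lemma cyclic_potential:
  fixes c :: "nat \<Rightarrow> real"
  assumes "0 < p" "(\<Sum>i<p. c i) = 0"
  obtains \<phi> where "\<And>i. i < p \<Longrightarrow> \<phi> i - \<phi> (Suc i mod p) = c i"
    and "\<And>i. i < p \<Longrightarrow> \<bar>\<phi> i\<bar> \<le> (\<Sum>i<p. \<bar>c i\<bar>)"
proof
  fix i assume "i < p"
  show "(- (\<Sum>k<i. c k)) - (- (\<Sum>k<Suc i mod p. c k)) = c i"
  proof (cases "Suc i < p")
    case False
    with \<open>i < p\<close> have "Suc i = p" by simp
    then have "(\<Sum>k<i. c k) + c i = 0" using assms(2) by (metis sum.lessThan_Suc)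
    moreover have "Suc i mod p = 0" using \<open>Suc i = p\<close> by simp
    ultimately show ?thesis by simp
  qed simp
  have "\<bar>- (\<Sum>k<i. c k)\<bar> \<le> (\<Sum>k<i. \<bar>c k\<bar>)" by (simp add: sum_abs)
  also have "\<dots> \<le> (\<Sum>k<p. \<bar>c k\<bar>)" using \<open>i < p\<close> by (intro sum_mono2) auto
  finally show "\<bar>- (\<Sum>k<i. c k)\<bar> \<le> (\<Sum>k<p. \<bar>c k\<bar>)" .
qed

lemma abs_mean_le:
  fixes L :: "nat \<Rightarrow> real"
  assumes "0 < p" "\<And>i. i < p \<Longrightarrow> \<bar>L i\<bar> \<le> b"
  shows "\<bar>(\<Sum>i<p. L i) / real p\<bar> \<le> b"
proof -
  have "(\<Sum>i<p. \<bar>L i\<bar>) \<le> real p * b"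
    using sum_bounded_above[of "{..<p}" "\<lambda>i. \<bar>L i\<bar>" b] assms(2) by simp
  then have "\<bar>\<Sum>i<p. L i\<bar> \<le> real p * b"
    using sum_abs[of L "{..<p}"] by linarith
  with \<open>0 < p\<close> show ?thesis by (simp add: field_simps)
qed

lemma mean_cyclic_potential:
  fixes L :: "nat \<Rightarrow> real"
  assumes "0 < p" and L_bound: "\<And>i. i < p \<Longrightarrow> \<bar>L i\<bar> \<le> b"
  obtains \<phi> where "\<And>i. i < p \<Longrightarrow> \<phi> i - \<phi> (Suc i mod p) = L i - (\<Sum>i<p. L i) / real p"
    and "\<And>i. i < p \<Longrightarrow> \<bar>\<phi> i\<bar> \<le> 2 * real p * b"
proof -
  define \<mu> where "\<mu> = (\<Sum>i<p. L i) / real p"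
  have "\<bar>\<mu>\<bar> \<le> b" unfolding \<mu>_def by (rule abs_mean_le[OF assms])
  have "(\<Sum>i<p. L i - \<mu>) = 0" using \<open>0 < p\<close> by (simp add: \<mu>_def sum_subtractf)
  then obtain \<phi> where step: "\<And>i. i < p \<Longrightarrow> \<phi> i - \<phi> (Suc i mod p) = L i - \<mu>"
    and bound: "\<And>i. i < p \<Longrightarrow> \<bar>\<phi> i\<bar> \<le> (\<Sum>i<p. \<bar>L i - \<mu>\<bar>)"
    using cyclic_potential[OF \<open>0 < p\<close>] by blast
  have "(\<Sum>i<p. \<bar>L i - \<mu>\<bar>) \<le> (\<Sum>i<p. 2 * b)"
  proof (rule sum_mono)
    fix i assume "i \<in> {..<p}"
    then have "\<bar>L i\<bar> \<le> b" using L_bound by simp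
    then show "\<bar>L i - \<mu>\<bar> \<le> 2 * b" using \<open>\<bar>\<mu>\<bar> \<le> b\<close> by arith
  qed
  show thesis
  proof (rule that)
    show "\<phi> i - \<phi> (Suc i mod p) = L i - (\<Sum>i<p. L i) / real p" if "i < p" for i
      using step[OF that] by (simp add: \<mu>_def)
    show "\<bar>\<phi> i\<bar> \<le> 2 * real p * b" if "i < p" for i
      using bound[OF that] \<open>(\<Sum>i<p. \<bar>L i - \<mu>\<bar>) \<le> (\<Sum>i<p. 2 * b)\<close> by simp
  qed
qed

lemma sum_near_telescoping:
  fixes s \<psi> :: "nat \<Rightarrow> real"
  assumes "\<And>k. \<bar>\<psi> k\<bar> \<le> P" "\<psi> N = 0" "0 \<le> w" "0 \<le> K"
    and err: "\<And>k. k < N \<Longrightarrow> \<bar>s k - \<mu> - (\<psi> k - \<psi> (Suc k))\<bar> \<le> (if G k then w else K)"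
  shows "\<bar>(\<Sum>k<N. s k) - real N * \<mu>\<bar> \<le> P + real N * w + K * real (card {k. k < N \<and> \<not> G k})"
proof -
  have "(\<Sum>k<N. s k) - real N * \<mu> = (\<Sum>k<N. s k - \<mu>)"
    by (simp add: sum_subtractf)
  also have "\<dots> = (\<Sum>k<N. \<psi> k - \<psi> (Suc k)) + (\<Sum>k<N. s k - \<mu> - (\<psi> k - \<psi> (Suc k)))"
    by (simp add: sum.distrib[symmetric])
  also have "(\<Sum>k<N. \<psi> k - \<psi> (Suc k)) = \<psi> 0"
    using sum_lessThan_telescope'[of \<psi> N] \<open>\<psi> N = 0\<close> by simp
  finally have split: "(\<Sum>k<N. s k) - real N * \<mu> = \<psi> 0 + (\<Sum>k<N. s k - \<mu> - (\<psi> k - \<psi> (Suc k)))" .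
  have "\<bar>\<Sum>k<N. s k - \<mu> - (\<psi> k - \<psi> (Suc k))\<bar> \<le> (\<Sum>k<N. \<bar>s k - \<mu> - (\<psi> k - \<psi> (Suc k))\<bar>)"
    by (rule sum_abs)
  also have "\<dots> \<le> real N * w + K * real (card {k. k < N \<and> \<not> G k})"
    using sum_le_exceptions[OF \<open>0 \<le> w\<close> \<open>0 \<le> K\<close> err] .
  finally show ?thesis using split assms(1)[of 0] by linarith
qed

text \<open>The sum telescopes against a cyclic potential of \<open>L\<close> minus its mean along every stretch on
  which \<open>s\<close> follows \<open>L\<close> index by index; each break of such a stretch costs a bounded amount.\<close>
lemma sum_shadowing_cycle:
  fixes s L :: "nat \<Rightarrow> real" and g :: "nat \<Rightarrow> bool" and j :: "nat \<Rightarrow> nat"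
  assumes "0 < p" and g_lt: "\<And>k. g k \<Longrightarrow> k < N" and j_lt: "\<And>k. g k \<Longrightarrow> j k < p"
    and j_Suc: "\<And>k. g k \<Longrightarrow> g (Suc k) \<Longrightarrow> j (Suc k) = Suc (j k) mod p"
    and close: "\<And>k. g k \<Longrightarrow> \<bar>s k - L (j k)\<bar> \<le> w" and "0 \<le> w"
    and s_bound: "\<And>k. k < N \<Longrightarrow> \<bar>s k\<bar> \<le> b" and L_bound: "\<And>i. i < p \<Longrightarrow> \<bar>L i\<bar> \<le> b"
  shows "\<bar>(\<Sum>k<N. s k) - real N * ((\<Sum>i<p. L i) / real p)\<bar>
    \<le> real N * w + (6 * real p + 2) * b * (2 * real (card {k. k < N \<and> \<not> g k}) + 1)"
proof -
  define \<mu> where "\<mu> = (\<Sum>i<p. L i) / real p"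
  define B where "B = real (card {k. k < N \<and> \<not> g k})"
  define K where "K = 2 * b + 4 * real p * b"
  have "0 \<le> b" using L_bound[of 0] \<open>0 < p\<close> by linarith
  have "\<bar>\<mu>\<bar> \<le> b" unfolding \<mu>_def by (rule abs_mean_le[OF \<open>0 < p\<close> L_bound])
  obtain \<phi> where \<phi>_step: "\<And>i. i < p \<Longrightarrow> \<phi> i - \<phi> (Suc i mod p) = L i - \<mu>"
    and \<phi>_bound: "\<And>i. i < p \<Longrightarrow> \<bar>\<phi> i\<bar> \<le> 2 * real p * b"
    using mean_cyclic_potential[of p L b] \<open>0 < p\<close> L_bound unfolding \<mu>_def by metis
  define \<psi> where "\<psi> k = (if g k then \<phi> (j k) else 0)" for k
  have \<psi>_le: "\<bar>\<psi> k\<bar> \<le> 2 * real p * b" for k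
    using \<phi>_bound j_lt \<open>0 \<le> b\<close> by (simp add: \<psi>_def)
  have err: "\<bar>s k - \<mu> - (\<psi> k - \<psi> (Suc k))\<bar> \<le> (if g k \<and> g (Suc k) then w else K)" if "k < N" for k
  proof (cases "g k \<and> g (Suc k)")
    case True
    then have "\<psi> k - \<psi> (Suc k) = L (j k) - \<mu>" using \<phi>_step j_lt j_Suc by (simp add: \<psi>_def)
    with True close show ?thesis by simp
  next
    case False
    have "\<bar>s k - \<mu> - (\<psi> k - \<psi> (Suc k))\<bar> \<le> K"
      using s_bound[OF that] \<open>\<bar>\<mu>\<bar> \<le> b\<close> \<psi>_le[of k] \<psi>_le[of "Suc k"] unfolding K_def by arith
    with False show ?thesis by auto
  qed
  have "\<psi> N = 0" using g_lt by (auto simp: \<psi>_def)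
  from sum_near_telescoping[OF \<psi>_le this \<open>0 \<le> w\<close> _ err] \<open>0 \<le> b\<close>
  have "\<bar>(\<Sum>k<N. s k) - real N * \<mu>\<bar>
      \<le> 2 * real p * b + real N * w + K * real (card {k. k < N \<and> \<not> (g k \<and> g (Suc k))})"
    by (simp add: K_def)
  moreover have "K * real (card {k. k < N \<and> \<not> (g k \<and> g (Suc k))}) \<le> K * (2 * B + 1)"
    using card_broken_pairs_le[of g N] g_lt \<open>0 \<le> b\<close>
    by (intro mult_left_mono) (auto simp: B_def K_def)
  moreover have "0 \<le> 2 * real p * b * (2 * B)"
    using \<open>0 \<le> b\<close> by (simp add: B_def)
  moreover have "(6 * real p + 2) * b * (2 * B + 1)
      = K * (2 * B + 1) + 2 * real p * b * (2 * B) + 2 * real p * b"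
    by (simp add: K_def algebra_simps)
  ultimately show ?thesis
    unfolding \<mu>_def[symmetric] B_def[symmetric] by linarith
qed

section \<open>Comparison functions and minimal periodic orbits\<close>

lemma class_Kinf_mono: "class_Kinf a \<Longrightarrow> 0 \<le> s \<Longrightarrow> s \<le> t \<Longrightarrow> a s \<le> a t"
  unfolding class_Kinf_def by (metis atLeast_iff order.trans less_eq_real_def strict_mono_onD)

lemma class_Kinf_nonneg: "class_Kinf a \<Longrightarrow> 0 \<le> s \<Longrightarrow> 0 \<le> a s"
  using class_Kinf_mono[of a 0 s] unfolding class_Kinf_def by auto

lemma class_Kinf_pos: "class_Kinf a \<Longrightarrow> 0 < s \<Longrightarrow> 0 < a s"
  unfolding class_Kinf_def by (metis atLeast_iff less_eq_real_def strict_mono_onD)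

lemma class_Kinf_tendsto_0:
  assumes "class_Kinf a"
  shows "(a \<longlongrightarrow> 0) (at_right 0)"
proof -
  have "\<forall>x\<in>{0..}. (a \<longlongrightarrow> a x) (at x within {0..})"
    using assms by (simp add: class_Kinf_def continuous_on_def)
  then have "(a \<longlongrightarrow> a 0) (at 0 within {0..})"
    by (rule bspec) simp
  then have "(a \<longlongrightarrow> a 0) (at_right 0)"
    by (rule tendsto_within_subset) auto
  with assms show ?thesis by (simp add: class_Kinf_def)
qed

lemma orbit_dist_le_iff:
  "0 < p \<Longrightarrow> orbit_dist p Ps z \<le> e \<longleftrightarrow> (\<exists>j<p. norm (z - Ps j) \<le> e)"
  unfolding orbit_dist_def by (subst Min_le_iff) auto

lemma orbit_dist_nonneg: "0 < p \<Longrightarrow> 0 \<le> orbit_dist p Ps z"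
  unfolding orbit_dist_def by (subst Min_ge_iff) auto

lemma norm_fst_le_norm: "norm (fst z) \<le> norm z"
  by (metis norm_fst_le prod.collapse)

lemma minimal_orbit_separated:
  fixes Ps :: "nat \<Rightarrow> 'x::real_normed_vector \<times> 'u"
  assumes "minimal_orbit p Ps"
  obtains sep where "0 < sep"
    and "\<And>i j. i < p \<Longrightarrow> j < p \<Longrightarrow> i \<noteq> j \<Longrightarrow> sep \<le> norm (fst (Ps i) - fst (Ps j))"
proof -
  have "finite ((\<lambda>(i, j). fst (Ps i) - fst (Ps j)) ` ({..<p} \<times> {..<p}))" by simp
  from finite_set_avoid[OF this, of 0] obtain sep where "0 < sep"
    and avoid: "\<And>i j. i < p \<Longrightarrow> j < p \<Longrightarrow> fst (Ps i) - fst (Ps j) \<noteq> 0 \<Longrightarrow>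
                  sep \<le> norm (fst (Ps i) - fst (Ps j))"
    by (auto simp: dist_norm)
  show thesis
  proof (rule that[OF \<open>0 < sep\<close>])
    fix i j assume "i < p" "j < p" "i \<noteq> j"
    with assms have "fst (Ps i) - fst (Ps j) \<noteq> 0" by (auto simp: minimal_orbit_def)
    with \<open>i < p\<close> \<open>j < p\<close> show "sep \<le> norm (fst (Ps i) - fst (Ps j))" by (rule avoid)
  qed
qed

text \<open>Minimality separates the orbit states, and uniform continuity of \<open>f\<close> maps points near
  \<open>Ps j\<close> to within half that separation of the next orbit state.\<close>
lemma minimal_orbit_step_index:
  fixes f :: "'x::real_normed_vector \<Rightarrow> 'u::real_normed_vector \<Rightarrow> 'x"
  assumes "continuous_on (X \<times> U) (\<lambda>(x, u). f x u)" "compact X" "compact U"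
    and feasible: "feasible_orbit f X U p Ps" and "minimal_orbit p Ps"
  obtains \<epsilon>0 where "0 < \<epsilon>0"
    and "\<And>x u j j'. (x, u) \<in> X \<times> U \<Longrightarrow> j < p \<Longrightarrow> j' < p \<Longrightarrow>
           norm ((x, u) - Ps j) \<le> \<epsilon>0 \<Longrightarrow> norm (f x u - fst (Ps j')) \<le> \<epsilon>0 \<Longrightarrow> j' = Suc j mod p"
proof -
  obtain sep where "0 < sep"
    and sep: "\<And>i j. i < p \<Longrightarrow> j < p \<Longrightarrow> i \<noteq> j \<Longrightarrow> sep \<le> norm (fst (Ps i) - fst (Ps j))"
    using minimal_orbit_separated[OF \<open>minimal_orbit p Ps\<close>] by blast
  have "uniformly_continuous_on (X \<times> U) (\<lambda>(x, u). f x u)"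
    using assms by (intro compact_uniformly_continuous compact_Times)
  then obtain d where "0 < d" and d: "\<And>z z'. z \<in> X \<times> U \<Longrightarrow> z' \<in> X \<times> U \<Longrightarrow> dist z' z < d \<Longrightarrow>
      dist ((\<lambda>(x, u). f x u) z') ((\<lambda>(x, u). f x u) z) < sep / 2"
    using \<open>0 < sep\<close> unfolding uniformly_continuous_on_def by (metis half_gt_zero)
  show thesis
  proof (rule that[of "min (d / 2) (sep / 4)"])
    show "0 < min (d / 2) (sep / 4)" using \<open>0 < d\<close> \<open>0 < sep\<close> by simp
    fix x u j j'
    assume "(x, u) \<in> X \<times> U" "j < p" "j' < p"
      and near: "norm ((x, u) - Ps j) \<le> min (d / 2) (sep / 4)"
      and near': "norm (f x u - fst (Ps j')) \<le> min (d / 2) (sep / 4)"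
    have "Ps j \<in> X \<times> U" "fst (Ps (Suc j mod p)) = f (fst (Ps j)) (snd (Ps j))"
      using feasible \<open>j < p\<close> by (auto simp: feasible_orbit_def)
    then have "norm (f x u - fst (Ps (Suc j mod p))) < sep / 2"
      using d[OF \<open>Ps j \<in> X \<times> U\<close> \<open>(x, u) \<in> X \<times> U\<close>] near \<open>0 < d\<close>
      by (simp add: dist_norm case_prod_beta)
    moreover have "norm (f x u - fst (Ps j')) \<le> sep / 4" using near' by simp
    moreover have "norm (fst (Ps j') - fst (Ps (Suc j mod p)))
        \<le> norm (f x u - fst (Ps (Suc j mod p))) + norm (f x u - fst (Ps j'))"
      using norm_triangle_ineq4[of "f x u - fst (Ps (Suc j mod p))" "f x u - fst (Ps j')"] by simp
    ultimately have "norm (fst (Ps j') - fst (Ps (Suc j mod p))) < sep" using \<open>0 < sep\<close> by linarith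
    moreover have "Suc j mod p < p" using \<open>j < p\<close> by simp
    ultimately show "j' = Suc j mod p"
      using sep[OF \<open>j' < p\<close>, of "Suc j mod p"] by fastforce
  qed
qed

section \<open>Linearly discounted costs\<close>

definition weighted_cost ::
    "('x \<Rightarrow> 'u \<Rightarrow> 'x) \<Rightarrow> ('x \<Rightarrow> 'u \<Rightarrow> real) \<Rightarrow> nat \<Rightarrow> 'x \<Rightarrow> (nat \<Rightarrow> 'u) \<Rightarrow> real" where
  "weighted_cost f g N x u = (\<Sum>k<N. real (N - k) / real N * g (traj f u x k) (u k))"

definition traj_avg ::
    "('x \<Rightarrow> 'u \<Rightarrow> 'x) \<Rightarrow> ('x \<Rightarrow> real) \<Rightarrow> nat \<Rightarrow> 'x \<Rightarrow> (nat \<Rightarrow> 'u) \<Rightarrow> real" where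
  "traj_avg f h N x u = (\<Sum>k<N. h (traj f u x (Suc k))) / real N"

lemma Vbeta_eq_Inf_weighted_cost: "Vbeta f X U g N x = Inf (weighted_cost f g N x ` adm f X U N x)"
  by (simp add: Vbeta_def weighted_cost_def)

lemma adm_traj_in: "u \<in> adm f X U N x \<Longrightarrow> k \<le> N \<Longrightarrow> traj f u x k \<in> X"
  by (simp add: adm_def)

lemma adm_control_in: "u \<in> adm f X U N x \<Longrightarrow> k < N \<Longrightarrow> u k \<in> U"
  by (simp add: adm_def)

lemma weighted_cost_nonneg:
  "(\<And>k. k < N \<Longrightarrow> 0 \<le> g (traj f u x k) (u k)) \<Longrightarrow> 0 \<le> weighted_cost f g N x u"
  unfolding weighted_cost_def by (intro sum_nonneg mult_nonneg_nonneg) auto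

lemma sum_linear_weights: "0 < N \<Longrightarrow> (\<Sum>k<N. real (N - k) / real N) = (real N + 1) / 2"
proof -
  have "(\<Sum>k<n. real n - real k) = real n * (real n + 1) / 2" for n
    by (induction n) (simp_all add: sum_subtractf field_simps)
  moreover assume "0 < N"
  ultimately show ?thesis
    by (simp add: sum_divide_distrib[symmetric] of_nat_diff)
qed

lemma sum_linear_weights_telescope:
  fixes h :: "nat \<Rightarrow> real"
  assumes "0 < N"
  shows "(\<Sum>k<N. real (N - k) / real N * (h k - h (Suc k))) = h 0 - (\<Sum>k<N. h (Suc k)) / real N"
proof -
  have "(\<Sum>k<n. (real N - real k) * (h k - h (Suc k)))
      = real N * h 0 - (real N - real n) * h n - (\<Sum>k<n. h (Suc k))" for n
    by (induction n) (simp_all add: algebra_simps)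
  from this[of N] assms show ?thesis
    by (simp add: sum_divide_distrib[symmetric] of_nat_diff field_simps)
qed

lemma weighted_cost_ltilde:
  assumes "0 < N"
  shows "weighted_cost f (ltilde f l ls lam) N x u
       = weighted_cost f l N x u - (real N + 1) / 2 * ls + lam x - traj_avg f lam N x u"
proof -
  have "weighted_cost f (ltilde f l ls lam) N x u
      = (\<Sum>k<N. real (N - k) / real N * l (traj f u x k) (u k) - ls * (real (N - k) / real N)
          + real (N - k) / real N * (lam (traj f u x k) - lam (traj f u x (Suc k))))"
    unfolding weighted_cost_def ltilde_def by (intro sum.cong) (auto simp: algebra_simps)
  also have "\<dots> = weighted_cost f l N x u - ls * (\<Sum>k<N. real (N - k) / real N)
      + (\<Sum>k<N. real (N - k) / real N * (lam (traj f u x k) - lam (traj f u x (Suc k))))"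
    unfolding weighted_cost_def by (simp add: sum.distrib sum_subtractf sum_distrib_left)
  also have "(\<Sum>k<N. real (N - k) / real N) = (real N + 1) / 2"
    by (rule sum_linear_weights[OF assms])
  also have "(\<Sum>k<N. real (N - k) / real N * (lam (traj f u x k) - lam (traj f u x (Suc k))))
      = lam (traj f u x 0) - (\<Sum>k<N. lam (traj f u x (Suc k))) / real N"
    by (rule sum_linear_weights_telescope[OF assms])
  finally show ?thesis by (simp add: traj_avg_def algebra_simps)
qed

lemma Vbeta_le_weighted_cost:
  assumes "\<And>v. v \<in> adm f X U N x \<Longrightarrow> 0 \<le> weighted_cost f g N x v" "u \<in> adm f X U N x"
  shows "Vbeta f X U g N x \<le> weighted_cost f g N x u"
  unfolding Vbeta_eq_Inf_weighted_cost using assms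
  by (intro cInf_lower) (auto intro: bdd_belowI[of _ 0])

lemma Vbeta_approx:
  assumes "adm f X U N x \<noteq> {}" "0 < e"
  obtains u where "u \<in> adm f X U N x" "weighted_cost f g N x u < Vbeta f X U g N x + e"
  using cInf_lessD[of "weighted_cost f g N x ` adm f X U N x" "Vbeta f X U g N x + e"] assms
  unfolding Vbeta_eq_Inf_weighted_cost by auto

section \<open>Strict dissipativity with respect to a periodic orbit\<close>

text \<open>\<open>\<alpha>\<close> and \<open>\<omega>\<close> are the comparison functions of (A3) and (A15).\<close>
locale periodic_strict_dissipativity =
  fixes f :: "'x::real_normed_vector \<Rightarrow> 'u::real_normed_vector \<Rightarrow> 'x"
    and X :: "'x set" and U :: "'u set" and l :: "'x \<Rightarrow> 'u \<Rightarrow> real"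
    and lam :: "'x \<Rightarrow> real" and lbar :: real
    and p :: nat and Ps :: "nat \<Rightarrow> 'x \<times> 'u" and \<alpha> \<omega> :: "real \<Rightarrow> real"
  assumes f_cont: "continuous_on (X \<times> U) (\<lambda>(x, u). f x u)"
    and compact_X: "compact X" and compact_U: "compact U"
    and orbit_feasible: "feasible_orbit f X U p Ps" and orbit_minimal: "minimal_orbit p Ps"
    and l_nonneg: "\<And>x u. x \<in> X \<Longrightarrow> u \<in> U \<Longrightarrow> 0 \<le> l x u"
    and lam_bounded: "\<And>x. x \<in> X \<Longrightarrow> \<bar>lam x\<bar> \<le> lbar"
    and class_Kinf_\<alpha>: "class_Kinf \<alpha>"
    and dissipation: "\<And>x u. x \<in> X \<Longrightarrow> u \<in> U \<Longrightarrow> f x u \<in> X \<Longrightarrow>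
                        \<alpha> (orbit_dist p Ps (x, u)) \<le> ltilde f l (lstar f X U l) lam x u"
    and class_Kinf_\<omega>: "class_Kinf \<omega>"
    and lam_near_orbit: "\<And>x k. x \<in> X \<Longrightarrow> k < p \<Longrightarrow>
                        \<bar>lam x - lam (fst (Ps k))\<bar> \<le> \<omega> (norm (x - fst (Ps k)))"
begin

abbreviation rotated :: "'x \<Rightarrow> 'u \<Rightarrow> real" where
  "rotated \<equiv> ltilde f l (lstar f X U l) lam"

definition lam_mean :: real where
  "lam_mean = (\<Sum>i<p. lam (fst (Ps i))) / real p"

lemma period_pos: "0 < p"
  using orbit_feasible by (simp add: feasible_orbit_def)

lemma orbit_in: "k < p \<Longrightarrow> Ps k \<in> X \<times> U"
  using orbit_feasible by (simp add: feasible_orbit_def)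

lemma lbar_nonneg: "0 \<le> lbar"
  using lam_bounded[of "fst (Ps 0)"] orbit_in[OF period_pos] by (auto simp: mem_Times_iff)

definition tracking_radius :: "real \<Rightarrow> bool" where
  "tracking_radius \<epsilon> \<longleftrightarrow> 0 < \<epsilon> \<and> (\<forall>x u j j'. (x, u) \<in> X \<times> U \<longrightarrow> j < p \<longrightarrow> j' < p \<longrightarrow>
     norm ((x, u) - Ps j) \<le> \<epsilon> \<longrightarrow> norm (f x u - fst (Ps j')) \<le> \<epsilon> \<longrightarrow> j' = Suc j mod p)"

lemma tracking_radiusD:
  "tracking_radius \<epsilon> \<Longrightarrow> (x, u) \<in> X \<times> U \<Longrightarrow> j < p \<Longrightarrow> j' < p \<Longrightarrow>
    norm ((x, u) - Ps j) \<le> \<epsilon> \<Longrightarrow> norm (f x u - fst (Ps j')) \<le> \<epsilon> \<Longrightarrow> j' = Suc j mod p"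
  unfolding tracking_radius_def by blast

lemma tracking_radius_le: "tracking_radius \<epsilon>0 \<Longrightarrow> 0 < \<epsilon> \<Longrightarrow> \<epsilon> \<le> \<epsilon>0 \<Longrightarrow> tracking_radius \<epsilon>"
  unfolding tracking_radius_def by (meson order_trans)

lemma ex_tracking_radius: obtains \<epsilon> where "tracking_radius \<epsilon>"
  using minimal_orbit_step_index[OF f_cont compact_X compact_U orbit_feasible orbit_minimal]
  unfolding tracking_radius_def by metis

lemma weighted_cost_l_nonneg: "u \<in> adm f X U N x \<Longrightarrow> 0 \<le> weighted_cost f l N x u"
  by (rule weighted_cost_nonneg) (simp add: l_nonneg adm_traj_in adm_control_in)

lemma weighted_cost_rotated_lower:
  assumes "u \<in> adm f X U N x"
  shows "(\<Sum>k<N. real (N - k) / real N * \<alpha> (orbit_dist p Ps (traj f u x k, u k)))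
           \<le> weighted_cost f rotated N x u"
  unfolding weighted_cost_def
proof (rule sum_mono)
  fix k assume "k \<in> {..<N}"
  then have "traj f u x k \<in> X" "u k \<in> U" "f (traj f u x k) (u k) \<in> X"
    using adm_traj_in[OF assms, of k] adm_traj_in[OF assms, of "Suc k"]
      adm_control_in[OF assms, of k]
    by auto
  then show "real (N - k) / real N * \<alpha> (orbit_dist p Ps (traj f u x k, u k))
      \<le> real (N - k) / real N * rotated (traj f u x k) (u k)"
    by (intro mult_left_mono dissipation) auto
qed

lemma rotated_nonneg: "x \<in> X \<Longrightarrow> u \<in> U \<Longrightarrow> f x u \<in> X \<Longrightarrow> 0 \<le> rotated x u"
  using dissipation class_Kinf_nonneg[OF class_Kinf_\<alpha> orbit_dist_nonneg[OF period_pos]]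
  by (meson order_trans)

lemma weighted_cost_rotated_nonneg:
  assumes "u \<in> adm f X U N x"
  shows "0 \<le> weighted_cost f rotated N x u"
proof (rule weighted_cost_nonneg)
  fix k assume "k < N"
  then show "0 \<le> rotated (traj f u x k) (u k)"
    using adm_traj_in[OF assms, of k] adm_traj_in[OF assms, of "Suc k"]
      adm_control_in[OF assms, of k]
    by (intro rotated_nonneg) auto
qed

lemma traj_avg_bounded:
  assumes "u \<in> adm f X U N x"
  shows "\<bar>traj_avg f lam N x u\<bar> \<le> lbar"
proof -
  have "(\<Sum>k<N. \<bar>lam (traj f u x (Suc k))\<bar>) \<le> of_nat (card {..<N}) * lbar"
  proof (rule sum_bounded_above)
    fix k assume "k \<in> {..<N}"
    then have "traj f u x (Suc k) \<in> X"
      using adm_traj_in[OF assms, of "Suc k"] by (simp del: traj.simps)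
    then show "\<bar>lam (traj f u x (Suc k))\<bar> \<le> lbar" by (rule lam_bounded)
  qed
  then have "\<bar>\<Sum>k<N. lam (traj f u x (Suc k))\<bar> \<le> real N * lbar"
    by (metis card_lessThan order_trans sum_abs)
  then show ?thesis
    using lbar_nonneg by (cases "N = 0") (auto simp: traj_avg_def field_simps)
qed

lemma card_far_steps_le:
  assumes "0 < \<epsilon>" "0 < N" "0 < m" "u \<in> adm f X U N x"
    and "weighted_cost f rotated N x u \<le> D"
  shows "real (card {k. k < N \<and> \<epsilon> < orbit_dist p Ps (traj f u x k, u k)})
           \<le> real m + D * real N / (real m * \<alpha> \<epsilon>)"
proof (rule card_large_terms_le[OF \<open>0 < N\<close> \<open>0 < m\<close>])
  show "0 \<le> \<alpha> (orbit_dist p Ps (traj f u x k, u k))" for k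
    by (rule class_Kinf_nonneg[OF class_Kinf_\<alpha> orbit_dist_nonneg[OF period_pos]])
  show "0 < \<alpha> \<epsilon>" by (rule class_Kinf_pos[OF class_Kinf_\<alpha> \<open>0 < \<epsilon>\<close>])
  show "(\<Sum>k<N. real (N - k) / real N * \<alpha> (orbit_dist p Ps (traj f u x k, u k))) \<le> D"
    using weighted_cost_rotated_lower[OF assms(4)] assms(5) by linarith
  show "\<alpha> \<epsilon> \<le> \<alpha> (orbit_dist p Ps (traj f u x k, u k))"
    if "\<epsilon> < orbit_dist p Ps (traj f u x k, u k)" for k
    using that \<open>0 < \<epsilon>\<close> by (intro class_Kinf_mono[OF class_Kinf_\<alpha>]) auto
qed

lemma sum_lam_traj_near_orbit:
  assumes "tracking_radius \<epsilon>" and adm: "u \<in> adm f X U N z"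
  shows "\<bar>(\<Sum>k<N. lam (traj f u z k)) - real N * lam_mean\<bar>
    \<le> real N * \<omega> \<epsilon> + (6 * real p + 2) * lbar
         * (2 * real (card {k. k < N \<and> \<epsilon> < orbit_dist p Ps (traj f u z k, u k)}) + 1)"
proof -
  define x where "x k = traj f u z k" for k
  define g where "g k \<longleftrightarrow> k < N \<and> orbit_dist p Ps (x k, u k) \<le> \<epsilon>" for k
  define j where "j k = (SOME i. i < p \<and> norm ((x k, u k) - Ps i) \<le> \<epsilon>)" for k
  have j: "j k < p" "norm ((x k, u k) - Ps (j k)) \<le> \<epsilon>" if "g k" for k
    using someI_ex[of "\<lambda>i. i < p \<and> norm ((x k, u k) - Ps i) \<le> \<epsilon>"] that
    by (auto simp: g_def j_def orbit_dist_le_iff[OF period_pos])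
  have state_near: "norm (x k - fst (Ps (j k))) \<le> \<epsilon>" if "g k" for k
    using j(2)[OF that] norm_fst_le_norm[of "(x k, u k) - Ps (j k)"] by simp
  have in_XU: "x k \<in> X" "u k \<in> U" if "k < N" for k
    using adm that by (auto simp: x_def adm_def)
  have "{k. k < N \<and> \<not> g k} = {k. k < N \<and> \<epsilon> < orbit_dist p Ps (traj f u z k, u k)}"
    by (auto simp: g_def x_def)
  moreover have "\<bar>(\<Sum>k<N. lam (x k)) - real N * ((\<Sum>i<p. lam (fst (Ps i))) / real p)\<bar>
      \<le> real N * \<omega> \<epsilon> + (6 * real p + 2) * lbar * (2 * real (card {k. k < N \<and> \<not> g k}) + 1)"
  proof (rule sum_shadowing_cycle[OF period_pos])
    show "j (Suc k) = Suc (j k) mod p" if "g k" "g (Suc k)" for k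
      using that j[OF that(1)] j(1)[OF that(2)] state_near[OF that(2)] in_XU[of k]
      by (intro tracking_radiusD[OF \<open>tracking_radius \<epsilon>\<close>, of "x k" "u k"]) (auto simp: g_def x_def)
    show "\<bar>lam (x k) - lam (fst (Ps (j k)))\<bar> \<le> \<omega> \<epsilon>" if "g k" for k
      using lam_near_orbit[OF in_XU(1) j(1)] class_Kinf_mono[OF class_Kinf_\<omega> _ state_near] that
      by (force simp: g_def)
    show "0 \<le> \<omega> \<epsilon>"
      using class_Kinf_nonneg[OF class_Kinf_\<omega>] \<open>tracking_radius \<epsilon>\<close>
      by (simp add: tracking_radius_def)
    show "\<bar>lam (fst (Ps i))\<bar> \<le> lbar" if "i < p" for i
      using lam_bounded orbit_in[OF that] by (auto simp: mem_Times_iff)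
  qed (use j in_XU lam_bounded in \<open>auto simp: g_def\<close>)
  ultimately show ?thesis by (simp add: x_def lam_mean_def)
qed

lemma traj_avg_deviation:
  assumes "tracking_radius \<epsilon>" "0 < N" "0 < m" and adm: "u \<in> adm f X U N z"
    and cost: "weighted_cost f rotated N z u \<le> D"
  defines "K \<equiv> (6 * real p + 2) * lbar"
  shows "\<bar>traj_avg f lam N z u - lam_mean\<bar>
    \<le> \<omega> \<epsilon> + 2 * K * D / (real m * \<alpha> \<epsilon>) + (K * (2 * real m + 1) + 2 * lbar) / real N"
proof -
  define x where "x k = traj f u z k" for k
  define far where "far = real (card {k. k < N \<and> \<epsilon> < orbit_dist p Ps (x k, u k)})"
  have "0 \<le> K" using lbar_nonneg by (simp add: K_def)
  have "0 < \<epsilon>" using \<open>tracking_radius \<epsilon>\<close> by (simp add: tracking_radius_def)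
  then have "0 < real m * \<alpha> \<epsilon>"
    using \<open>0 < m\<close> class_Kinf_pos[OF class_Kinf_\<alpha>] by simp
  have "far \<le> real m + D * real N / (real m * \<alpha> \<epsilon>)"
    using card_far_steps_le[OF \<open>0 < \<epsilon>\<close> \<open>0 < N\<close> \<open>0 < m\<close> adm cost] by (simp add: far_def x_def)
  then have "K * (2 * far + 1) \<le> K * (2 * (real m + D * real N / (real m * \<alpha> \<epsilon>)) + 1)"
    using \<open>0 \<le> K\<close> by (intro mult_left_mono) auto
  also have "\<dots> = K * (2 * real m + 1) + real N * (2 * K * D / (real m * \<alpha> \<epsilon>))"
    using \<open>0 < real m * \<alpha> \<epsilon>\<close> by (simp add: field_simps)
  finally have far_bound:
    "K * (2 * far + 1) \<le> K * (2 * real m + 1) + real N * (2 * K * D / (real m * \<alpha> \<epsilon>))" .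
  have near: "\<bar>(\<Sum>k<N. lam (x k)) - real N * lam_mean\<bar> \<le> real N * \<omega> \<epsilon> + K * (2 * far + 1)"
    using sum_lam_traj_near_orbit[OF \<open>tracking_radius \<epsilon>\<close> adm] by (simp add: K_def far_def x_def)
  have "(\<Sum>k<N. lam (x (Suc k))) - real N * lam_mean
      = ((\<Sum>k<N. lam (x k)) - real N * lam_mean) + (lam (x N) - lam (x 0))"
    using sum_lessThan_telescope[of "\<lambda>k. lam (x k)" N] by (simp add: sum_subtractf)
  moreover have "\<bar>lam (x N) - lam (x 0)\<bar> \<le> 2 * lbar"
    using lam_bounded[OF adm_traj_in[OF adm, of N]] lam_bounded[OF adm_traj_in[OF adm, of 0]]
    by (simp add: x_def)
  ultimately have "\<bar>(\<Sum>k<N. lam (x (Suc k))) - real N * lam_mean\<bar>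
      \<le> real N * \<omega> \<epsilon> + real N * (2 * K * D / (real m * \<alpha> \<epsilon>)) + (K * (2 * real m + 1) + 2 * lbar)"
    using near far_bound by linarith
  moreover have "\<bar>traj_avg f lam N z u - lam_mean\<bar>
      = \<bar>(\<Sum>k<N. lam (x (Suc k))) - real N * lam_mean\<bar> / real N"
    using \<open>0 < N\<close> by (simp add: traj_avg_def x_def field_simps)
  ultimately have "\<bar>traj_avg f lam N z u - lam_mean\<bar>
      \<le> (real N * \<omega> \<epsilon> + real N * (2 * K * D / (real m * \<alpha> \<epsilon>))
          + (K * (2 * real m + 1) + 2 * lbar)) / real N"
    by (simp add: divide_right_mono)
  also have "\<dots> = \<omega> \<epsilon> + 2 * K * D / (real m * \<alpha> \<epsilon>) + (K * (2 * real m + 1) + 2 * lbar) / real N"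
    using \<open>0 < N\<close> by (simp add: add_divide_distrib)
  finally show ?thesis .
qed

lemma traj_avg_uniformly_close:
  assumes "0 < \<tau>"
  obtains N1 where "\<And>N z u. N1 \<le> N \<Longrightarrow> u \<in> adm f X U N z \<Longrightarrow> weighted_cost f rotated N z u \<le> D \<Longrightarrow>
    \<bar>traj_avg f lam N z u - lam_mean\<bar> \<le> \<tau>"
proof -
  define K where "K = (6 * real p + 2) * lbar"
  obtain \<epsilon>0 where "tracking_radius \<epsilon>0" by (rule ex_tracking_radius)
  have "\<forall>\<^sub>F \<epsilon> in at_right 0. \<omega> \<epsilon> < \<tau> / 3"
    using order_tendstoD(2)[OF class_Kinf_tendsto_0[OF class_Kinf_\<omega>], of "\<tau> / 3"] \<open>0 < \<tau>\<close>
    by simp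
  moreover have "\<forall>\<^sub>F \<epsilon> in at_right 0. 0 < \<epsilon> \<and> \<epsilon> \<le> \<epsilon>0"
    using \<open>tracking_radius \<epsilon>0\<close>
    by (auto simp: eventually_at_right_field tracking_radius_def intro!: exI[of _ \<epsilon>0])
  ultimately obtain \<epsilon> where "\<omega> \<epsilon> < \<tau> / 3" "0 < \<epsilon>" "\<epsilon> \<le> \<epsilon>0"
    using eventually_happens'[OF trivial_limit_at_right_real] eventually_conj by blast
  have "tracking_radius \<epsilon>"
    using tracking_radius_le[OF \<open>tracking_radius \<epsilon>0\<close> \<open>0 < \<epsilon>\<close> \<open>\<epsilon> \<le> \<epsilon>0\<close>] .
  have "\<forall>\<^sub>F m in sequentially. 2 * K * D / \<alpha> \<epsilon> / real m < \<tau> / 3"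
    using order_tendstoD(2)[OF lim_const_over_n[of "2 * K * D / \<alpha> \<epsilon>"], of "\<tau> / 3"] \<open>0 < \<tau>\<close>
    by simp
  then have "\<forall>\<^sub>F m in sequentially. 0 < m \<and> 2 * K * D / \<alpha> \<epsilon> / real m < \<tau> / 3"
    by (rule eventually_conj[OF eventually_gt_at_top])
  then obtain m where "0 < m" "2 * K * D / (real m * \<alpha> \<epsilon>) < \<tau> / 3"
    by (auto simp: eventually_sequentially field_simps)
  have "\<forall>\<^sub>F N in sequentially. (K * (2 * real m + 1) + 2 * lbar) / real N < \<tau> / 3"
    using order_tendstoD(2)[OF lim_const_over_n[of "K * (2 * real m + 1) + 2 * lbar"], of "\<tau> / 3"]
      \<open>0 < \<tau>\<close>
    by simp
  then have "\<forall>\<^sub>F N in sequentially. 0 < N \<and> (K * (2 * real m + 1) + 2 * lbar) / real N < \<tau> / 3"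
    by (rule eventually_conj[OF eventually_gt_at_top])
  then obtain N1 where N1: "\<And>N. N1 \<le> N \<Longrightarrow> 0 < N \<and> (K * (2 * real m + 1) + 2 * lbar) / real N < \<tau> / 3"
    by (auto simp: eventually_sequentially)
  show thesis
  proof (rule that)
    fix N z u assume "N1 \<le> N" "u \<in> adm f X U N z" "weighted_cost f rotated N z u \<le> D"
    with N1 have "\<bar>traj_avg f lam N z u - lam_mean\<bar>
        \<le> \<omega> \<epsilon> + 2 * K * D / (real m * \<alpha> \<epsilon>) + (K * (2 * real m + 1) + 2 * lbar) / real N"
      using traj_avg_deviation[OF \<open>tracking_radius \<epsilon>\<close> _ \<open>0 < m\<close>] by (simp add: K_def)
    with N1[OF \<open>N1 \<le> N\<close>] \<open>\<omega> \<epsilon> < \<tau> / 3\<close> \<open>2 * K * D / (real m * \<alpha> \<epsilon>) < \<tau> / 3\<close>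
    show "\<bar>traj_avg f lam N z u - lam_mean\<bar> \<le> \<tau>" by linarith
  qed
qed

lemma Xpi_D:
  assumes "x \<in> Xpi f X U l lam lbar C 1" "1 \<le> N"
  shows "adm f X U N x \<noteq> {}"
    and "Vbeta f X U l N x - (real N + 1) / 2 * lstar f X U l + lam x + lbar \<le> C"
  using assms by (auto simp: Xpi_def)

lemma weighted_cost_rotated_le:
  assumes x: "x \<in> Xpi f X U l lam lbar C 1" and "1 \<le> N" and u: "u \<in> adm f X U N x"
  shows "weighted_cost f rotated N x u \<le> weighted_cost f l N x u - Vbeta f X U l N x + C"
  using weighted_cost_ltilde[of N f l "lstar f X U l" lam x u] \<open>1 \<le> N\<close>
    Xpi_D(2)[OF x \<open>1 \<le> N\<close>] traj_avg_bounded[OF u]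
  by (simp add: abs_le_iff)

lemma Vbeta_rotated_le:
  assumes x: "x \<in> Xpi f X U l lam lbar C 1" and "1 \<le> N"
  shows "Vbeta f X U rotated N x \<le> C"
proof (rule field_le_epsilon)
  fix e :: real assume "0 < e"
  obtain u where u: "u \<in> adm f X U N x" and "weighted_cost f l N x u < Vbeta f X U l N x + e"
    by (rule Vbeta_approx[OF Xpi_D(1)[OF assms] \<open>0 < e\<close>])
  then have "weighted_cost f rotated N x u \<le> C + e"
    using weighted_cost_rotated_le[OF x \<open>1 \<le> N\<close> u] by linarith
  then show "Vbeta f X U rotated N x \<le> C + e"
    using Vbeta_le_weighted_cost[OF weighted_cost_rotated_nonneg u] by linarith
qed

text \<open>Nearly optimal controls for either cost have rotated cost at most \<open>C + 1\<close>, so the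
  value gap is governed by how well \<open>traj_avg\<close> concentrates along such controls.\<close>
lemma value_gap_le:
  assumes x: "x \<in> Xpi f X U l lam lbar C 1" and y: "y \<in> Xpi f X U l lam lbar C 1" and "1 \<le> N"
    and close: "\<And>z u. u \<in> adm f X U N z \<Longrightarrow> weighted_cost f rotated N z u \<le> C + 1 \<Longrightarrow>
                  \<bar>traj_avg f lam N z u - c\<bar> \<le> r"
  shows "Vbeta f X U rotated N y - lam y - Vbeta f X U rotated N x + lam x
           \<le> Vbeta f X U l N y - Vbeta f X U l N x + 2 * r"
proof (rule field_le_epsilon)
  fix e :: real assume "0 < e"
  define e' where "e' = min (e / 2) 1"
  have "0 < e'" using \<open>0 < e\<close> by (simp add: e'_def)
  obtain uy where uy: "uy \<in> adm f X U N y"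
    and uy_opt: "weighted_cost f l N y uy < Vbeta f X U l N y + e'"
    by (rule Vbeta_approx[OF Xpi_D(1)[OF y \<open>1 \<le> N\<close>] \<open>0 < e'\<close>])
  obtain ux where ux: "ux \<in> adm f X U N x"
    and ux_opt: "weighted_cost f rotated N x ux < Vbeta f X U rotated N x + e'"
    by (rule Vbeta_approx[OF Xpi_D(1)[OF x \<open>1 \<le> N\<close>] \<open>0 < e'\<close>])
  have "weighted_cost f rotated N y uy \<le> C + 1"
    using weighted_cost_rotated_le[OF y \<open>1 \<le> N\<close> uy] uy_opt by (simp add: e'_def)
  moreover have "weighted_cost f rotated N x ux \<le> C + 1"
    using Vbeta_rotated_le[OF x \<open>1 \<le> N\<close>] ux_opt by (simp add: e'_def)
  ultimately have "c - r \<le> traj_avg f lam N y uy" "traj_avg f lam N x ux \<le> c + r"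
    using close[OF uy] close[OF ux] by (auto simp: abs_le_iff)
  moreover have "Vbeta f X U rotated N y \<le> weighted_cost f rotated N y uy"
    by (rule Vbeta_le_weighted_cost[OF weighted_cost_rotated_nonneg uy])
  moreover have "Vbeta f X U l N x \<le> weighted_cost f l N x ux"
    by (rule Vbeta_le_weighted_cost[OF weighted_cost_l_nonneg ux])
  ultimately show "Vbeta f X U rotated N y - lam y - Vbeta f X U rotated N x + lam x
      \<le> Vbeta f X U l N y - Vbeta f X U l N x + 2 * r + e"
    using weighted_cost_ltilde[of N f l "lstar f X U l" lam y uy]
      weighted_cost_ltilde[of N f l "lstar f X U l" lam x ux] \<open>1 \<le> N\<close> uy_opt ux_opt
      min.cobounded1[of "e / 2" 1]
    unfolding e'_def by linarith
qed

lemma value_gap_class_L_bound: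
  "\<exists>\<delta>. class_L \<delta> \<and>
     (\<forall>x\<in>Xpi f X U l lam lbar C 1. \<forall>y\<in>Xpi f X U l lam lbar C 1. \<forall>N\<ge>1.
        Vbeta f X U rotated N y - lam y - Vbeta f X U rotated N x + lam x
        \<le> Vbeta f X U l N y - Vbeta f X U l N x + \<delta> (real N))"
proof -
  define Xpi1 where "Xpi1 = Xpi f X U l lam lbar C 1"
  define gap where "gap (N :: nat) x y = Vbeta f X U rotated N y - lam y
    - Vbeta f X U rotated N x + lam x - (Vbeta f X U l N y - Vbeta f X U l N x)" for N x y
  define S where "S N = {gap N x y | x y. 1 \<le> N \<and> x \<in> Xpi1 \<and> y \<in> Xpi1}" for N :: nat
  have gap_le: "gap N x y \<le> 2 * r"
    if "x \<in> Xpi1" "y \<in> Xpi1" "1 \<le> N" and "\<And>z u. u \<in> adm f X U N z \<Longrightarrow>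
      weighted_cost f rotated N z u \<le> C + 1 \<Longrightarrow> \<bar>traj_avg f lam N z u - c\<bar> \<le> r" for N x y c r
    using value_gap_le[of x C y N c r] that by (simp add: gap_def Xpi1_def)
  have bounded: "v \<le> 2 * lbar" if "v \<in> S N" for N v
  proof -
    from that obtain x y where "x \<in> Xpi1" "y \<in> Xpi1" "1 \<le> N" "v = gap N x y"
      by (auto simp: S_def)
    with traj_avg_bounded show ?thesis by (auto intro!: gap_le[where c = 0])
  qed
  have small: "\<exists>N1. \<forall>N\<ge>N1. \<forall>v\<in>S N. v \<le> \<tau>" if "0 < \<tau>" for \<tau>
  proof -
    obtain N1 where "\<And>N z u. N1 \<le> N \<Longrightarrow> u \<in> adm f X U N z \<Longrightarrow>
        weighted_cost f rotated N z u \<le> C + 1 \<Longrightarrow> \<bar>traj_avg f lam N z u - lam_mean\<bar> \<le> \<tau> / 2"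
      using traj_avg_uniformly_close[of "\<tau> / 2"] \<open>0 < \<tau>\<close> by auto
    then have "v \<le> \<tau>" if "N1 \<le> N" "v \<in> S N" for N v
      using that gap_le[where c = lam_mean and r = "\<tau> / 2"] by (auto simp: S_def)
    then show ?thesis by blast
  qed
  show ?thesis
  proof (intro exI[of _ "hyperbolic_envelope S"] conjI ballI allI impI)
    show "class_L (hyperbolic_envelope S)"
      by (rule class_L_hyperbolic_envelope[of S "2 * lbar"]) (use bounded lbar_nonneg small in auto)
    fix x y and N :: nat
    assume "x \<in> Xpi f X U l lam lbar C 1" "y \<in> Xpi f X U l lam lbar C 1" "1 \<le> N"
    then have "gap N x y \<le> hyperbolic_envelope S (real N)"
      using hyperbolic_envelope_upper[of S "2 * lbar"] bounded lbar_nonneg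
      by (auto simp: S_def Xpi1_def)
    then show "Vbeta f X U rotated N y - lam y - Vbeta f X U rotated N x + lam x
        \<le> Vbeta f X U l N y - Vbeta f X U l N x + hyperbolic_envelope S (real N)"
      by (simp add: gap_def)
  qed
qed

end

theorem lemma29:
  fixes f :: "'x::euclidean_space \<Rightarrow> 'u::euclidean_space \<Rightarrow> 'x"
    and X :: "'x set" and U :: "'u set" and l :: "'x \<Rightarrow> 'u \<Rightarrow> real"
    and lam :: "'x \<Rightarrow> real" and lbar :: real
    and ps :: nat and Ps :: "nat \<Rightarrow> 'x \<times> 'u" and C :: real
  assumes l_nonneg: "\<And>x u. x \<in> X \<Longrightarrow> u \<in> U \<Longrightarrow> l x u \<ge> 0"
    and A1: "continuous_on (X \<times> U) (\<lambda>(x, u). f x u)" "continuous_on (X \<times> U) (\<lambda>(x, u). l x u)"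
            "compact X" "compact U"
    and Ps_feas: "feasible_orbit f X U ps Ps"
    and Ps_opt: "orbit_avg l ps Ps = lstar f X U l"
    and Ps_min: "minimal_orbit ps Ps"
    and A3: "(\<forall>x\<in>X. \<bar>lam x\<bar> \<le> lbar) \<and>
             (\<exists>a. class_Kinf a \<and> (\<forall>x\<in>X. \<forall>u\<in>U. f x u \<in> X \<longrightarrow>
                 ltilde f l (lstar f X U l) lam x u \<ge> a (orbit_dist ps Ps (x, u))))"
    and A4: "\<exists>\<kappa>>0. \<exists>M::nat. \<exists>\<rho>. class_Kinf \<rho> \<and>
             (\<forall>j<ps. \<forall>x\<in>X. \<forall>y\<in>X. norm (x - fst (Ps j)) \<le> \<kappa> \<longrightarrow> norm (y - fst (Ps j)) \<le> \<kappa> \<longrightarrow>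
               (\<exists>u\<in>adm f X U M x. traj f u x M = y \<and>
                  (\<forall>k<M. orbit_dist ps Ps (traj f u x k, u k)
                      \<le> \<rho> (max (orbit_state_dist ps Ps x) (orbit_state_dist ps Ps y)))))"
    and A15: "continuous_on X lam \<and>
             (\<exists>a. class_Kinf a \<and> (\<forall>x\<in>X. \<forall>k<ps. \<bar>lam x - lam (fst (Ps k))\<bar> \<le> a (norm (x - fst (Ps k)))))"
  shows "\<exists>N0::nat. \<exists>\<delta>2. class_L \<delta>2 \<and>
     (\<forall>x\<in>Xpi f X U l lam lbar C N0. \<forall>y\<in>Xpi f X U l lam lbar C N0. \<forall>N\<ge>N0.
        Vbeta f X U (ltilde f l (lstar f X U l) lam) N y - lam y
          - Vbeta f X U (ltilde f l (lstar f X U l) lam) N x + lam x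
        \<le> Vbeta f X U l N y - Vbeta f X U l N x + \<delta>2 (real N))"
proof -
  obtain \<alpha> where "class_Kinf \<alpha>" and dissipation: "\<forall>x\<in>X. \<forall>u\<in>U. f x u \<in> X \<longrightarrow>
      \<alpha> (orbit_dist ps Ps (x, u)) \<le> ltilde f l (lstar f X U l) lam x u"
    using A3 by blast
  obtain \<omega> where "class_Kinf \<omega>"
    and "\<forall>x\<in>X. \<forall>k<ps. \<bar>lam x - lam (fst (Ps k))\<bar> \<le> \<omega> (norm (x - fst (Ps k)))"
    using A15 by blast
  with A1 A3 dissipation Ps_feas Ps_min l_nonneg \<open>class_Kinf \<alpha>\<close>
  interpret periodic_strict_dissipativity f X U l lam lbar ps Ps \<alpha> \<omega>
    by unfold_locales auto
  show ?thesis
    using value_gap_class_L_bound[of C] by (intro exI[of _ "1::nat"])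
qed

end
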